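(* Let $G$ be a graph (simple, connected, locally finite, with edges of arbitrary positive lengths), $\mathcal{L}(G)$ its line graph and $h:\mathcal{L}(G)\to G$ the map defined below. Then for every $x,y\in\mathcal{L}(G)$, $$d_{\mathcal{L}(G)}(x,y)\le d_G(h(x),h(y))+2\,l_{max},\qquad\text{where } l_{max}:=\sup_{e\in E(G)}L(e).$$
   Context: Graphs are regarded as geodesic metric spaces: each edge $e$ of length $L(e)$ is identified with the real interval $[0,L(e)]$, and $d_G$ is the induced shortest-path distance. The line graph $\mathcal{L}(G)$ has a vertex $V_e$ for each edge $e$ of $G$, and an edge $[V_{e_i},V_{e_j}]$ whenever $e_i\neq e_j$ and $e_i\cap e_j\neq\varnothing$, of length $(L(e_i)+L(e_j))/2$. $Pm(e)$ denotes the midpoint of $e\in E(G)$; $Pm_{\mathcal{L}}([V_{e_i},V_{e_j}])$ denotes the point of the edge $[V_{e_i},V_{e_j}]$ at distance $L(e_i)/2$ from $V_{e_i}$. The map $h$ is defined by $h(V_e)=Pm(e)$, $h(Pm_{\mathcal{L}}([V_{e_i},V_{e_j}]))=$ the vertex $e_i\cap e_j$ of $G$, and for $x_0$ in the interior of the segment from $V_e$ to $Pm_{\mathcal{L}}([V_e,V_{e_0}])$, $h(x_0)$ is the point of the half-edge of $e$ from $Pm(e)$ to the vertex $e\cap e_0$ at distance $d(x_0,V_e)$ from $Pm(e)$. *)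

theory Defs
  imports "HOL-Analysis.Analysis"
begin

text \<open>A point of the metric graph is represented by a triple (e, a, t) with e \<in> E, a \<in> e and
0 \<le> t \<le> L e: the point of edge e at distance t from its endpoint a.\<close>

definition simple_graph :: "'a set \<Rightarrow> 'a set set \<Rightarrow> bool" where
  "simple_graph V E \<longleftrightarrow> (\<forall>e\<in>E. e \<subseteq> V \<and> card e = 2)"

definition is_walk :: "'a set set \<Rightarrow> 'a list \<Rightarrow> bool" where
  "is_walk E ws \<longleftrightarrow> ws \<noteq> [] \<and> (\<forall>(a,b)\<in>set (zip ws (tl ws)). {a,b} \<in> E)"

definition walk_len :: "('a set \<Rightarrow> real) \<Rightarrow> 'a list \<Rightarrow> real" where
  "walk_len L ws = sum_list (map (\<lambda>(a,b). L {a,b}) (zip ws (tl ws)))"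

definition graph_connected :: "'a set \<Rightarrow> 'a set set \<Rightarrow> bool" where
  "graph_connected V E \<longleftrightarrow>
     (\<forall>u\<in>V. \<forall>w\<in>V. \<exists>ws. is_walk E ws \<and> hd ws = u \<and> last ws = w)"

definition locally_finite :: "'a set \<Rightarrow> 'a set set \<Rightarrow> bool" where
  "locally_finite V E \<longleftrightarrow> (\<forall>v\<in>V. finite {e\<in>E. v \<in> e})"

definition vdist :: "'a set set \<Rightarrow> ('a set \<Rightarrow> real) \<Rightarrow> 'a \<Rightarrow> 'a \<Rightarrow> real" where
  "vdist E L u w = Inf {walk_len L ws | ws. is_walk E ws \<and> hd ws = u \<and> last ws = w}"

definition mg_points :: "'a set set \<Rightarrow> ('a set \<Rightarrow> real) \<Rightarrow> ('a set \<times> 'a \<times> real) set" where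
  "mg_points E L = {(e, a, t). e \<in> E \<and> a \<in> e \<and> 0 \<le> t \<and> t \<le> L e}"

definition to_end :: "('a set \<Rightarrow> real) \<Rightarrow> ('a set \<times> 'a \<times> real) \<Rightarrow> 'a \<Rightarrow> real" where
  "to_end L p x = (case p of (e, a, t) \<Rightarrow> if x = a then t else L e - t)"

text \<open>Geodesic (shortest-path) distance on the metric graph: either along a common edge,
or leaving the edge of p through an endpoint x, travelling a shortest vertex path to an
endpoint y of the edge of q.\<close>
definition mg_dist :: "'a set set \<Rightarrow> ('a set \<Rightarrow> real) \<Rightarrow>
     ('a set \<times> 'a \<times> real) \<Rightarrow> ('a set \<times> 'a \<times> real) \<Rightarrow> real" where
  "mg_dist E L p q =
     Inf ({\<bar>to_end L p x - to_end L q x\<bar> | x. fst p = fst q \<and> x \<in> fst p}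
        \<union> {to_end L p x + vdist E L x y + to_end L q y | x y. x \<in> fst p \<and> y \<in> fst q})"

definition line_edges :: "'a set set \<Rightarrow> 'a set set set" where
  "line_edges E = {{e1, e2} | e1 e2. e1 \<in> E \<and> e2 \<in> E \<and> e1 \<noteq> e2 \<and> e1 \<inter> e2 \<noteq> {}}"

definition line_len :: "('a set \<Rightarrow> real) \<Rightarrow> 'a set set \<Rightarrow> real" where
  "line_len L f = (\<Sum>e\<in>f. L e) / 2"

definition other_end :: "'b set \<Rightarrow> 'b \<Rightarrow> 'b" where
  "other_end f a = (THE b. b \<in> f \<and> b \<noteq> a)"

text \<open>A point of L(G) is (f, e, t) with f = {e, e0}; it lies at distance t from V_e.
The midpoint Pm_L(f) is at distance L(e)/2 from V_e. If t \<le> L e / 2 the image is the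
point of e at distance t from Pm(e) towards the vertex v = e \<inter> e0, i.e. at distance
L e/2 - t from v; otherwise the point lies at distance (L e + L e0)/2 - t from V_e0 and
its image is the point of e0 at distance t - L e/2 from v.\<close>
definition hmap :: "('a set \<Rightarrow> real) \<Rightarrow> ('a set set \<times> 'a set \<times> real) \<Rightarrow> ('a set \<times> 'a \<times> real)" where
  "hmap L x = (case x of (f, e, t) \<Rightarrow>
     (let e0 = other_end f e; v = (THE v. v \<in> e \<inter> e0)
      in if t \<le> L e / 2 then (e, v, L e / 2 - t) else (e0, v, t - L e / 2)))"

end

theory Submission
  imports Defs
begin

text \<open>A walk \<open>u\<^sub>0 \<dots> u\<^sub>n\<close> in G from an endpoint of an edge X to an endpoint of an edge Y lifts
to the walk \<open>X, {u\<^sub>0,u\<^sub>1}, \<dots>, {u\<^sub>n\<^sub>-\<^sub>1,u\<^sub>n}, Y\<close> of the line graph; as a line-graph edge has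
the mean length of its two ends, the lift is at most \<open>(L X + L Y)/2\<close> longer than the walk.
The map h sends a point x of the line graph to a point of an edge X with x within \<open>L X/2\<close>
of \<open>V\<^sub>X\<close>. So x reaches y by going to \<open>V\<^sub>X\<close>, along a lifted geodesic between the endpoints
used by \<open>d\<^sub>G(h x, h y)\<close>, and from \<open>V\<^sub>Y\<close> to y, at a total extra cost of at most \<open>L X + L Y\<close>.\<close>

lemma is_walk_Cons_Cons: "is_walk E (u # w # ws) \<longleftrightarrow> {u, w} \<in> E \<and> is_walk E (w # ws)"
  by (auto simp: is_walk_def)

lemma is_walk_singleton: "is_walk E [u]"
  by (simp add: is_walk_def)

lemma walk_len_Cons_Cons: "walk_len L (u # w # ws) = L {u, w} + walk_len L (w # ws)"
  by (simp add: walk_len_def)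

lemma walk_len_singleton: "walk_len L [u] = 0"
  by (simp add: walk_len_def)

lemma walk_len_nonneg:
  assumes "is_walk E ws" "\<forall>e\<in>E. 0 \<le> L e"
  shows "0 \<le> walk_len L ws"
  using assms unfolding walk_len_def is_walk_def
  by (intro sum_list_nonneg) auto

lemma vdist_le_walk_len:
  assumes "is_walk E ws" "hd ws = u" "last ws = w" "\<forall>e\<in>E. 0 \<le> L e"
  shows "vdist E L u w \<le> walk_len L ws"
  unfolding vdist_def
proof (rule cInf_lower)
  show "walk_len L ws \<in> {walk_len L ws |ws. is_walk E ws \<and> hd ws = u \<and> last ws = w}"
    using assms by blast
  show "bdd_below {walk_len L ws |ws. is_walk E ws \<and> hd ws = u \<and> last ws = w}"
    using walk_len_nonneg[OF _ assms(4)] by (intro bdd_belowI[where m=0]) blast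
qed

lemma vdist_greatest:
  assumes "\<exists>ws. is_walk E ws \<and> hd ws = u \<and> last ws = w"
    and "\<And>ws. is_walk E ws \<Longrightarrow> hd ws = u \<Longrightarrow> last ws = w \<Longrightarrow> c \<le> walk_len L ws"
  shows "c \<le> vdist E L u w"
  unfolding vdist_def using assms by (intro cInf_greatest) blast+

lemma vdist_nonneg:
  assumes "\<exists>ws. is_walk E ws \<and> hd ws = u \<and> last ws = w" "\<forall>e\<in>E. 0 \<le> L e"
  shows "0 \<le> vdist E L u w"
  using assms walk_len_nonneg by (intro vdist_greatest) auto

lemma vdist_self:
  assumes "\<forall>e\<in>E. 0 \<le> L e"
  shows "vdist E L u u = 0"
proof -
  have "vdist E L u u \<le> walk_len L [u]"
    using assms by (intro vdist_le_walk_len[OF is_walk_singleton]) auto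
  moreover have "0 \<le> vdist E L u u"
    using assms is_walk_singleton[of E u] by (intro vdist_nonneg) force+
  ultimately show ?thesis by (simp add: walk_len_singleton)
qed

lemma simple_graph_edgeD:
  assumes "simple_graph V E" "X \<in> E"
  shows "X \<subseteq> V" "X \<noteq> {}"
  using assms unfolding simple_graph_def by auto

lemma simple_graph_common_vertex:
  assumes "simple_graph V E" "e \<in> E" "e' \<in> E" "e \<noteq> e'" "e \<inter> e' \<noteq> {}"
  shows "(THE v. v \<in> e \<inter> e') \<in> e \<inter> e'"
proof (rule theI')
  obtain v where v: "v \<in> e \<inter> e'" using assms(5) by blast
  have "u = v" if u: "u \<in> e \<inter> e'" for u
  proof (rule ccontr)
    assume "u \<noteq> v"
    then have "card {u, v} = 2" by simp
    moreover have "card e = 2" "card e' = 2" using assms(1-3) unfolding simple_graph_def by auto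
    moreover have "{u, v} \<subseteq> e" "{u, v} \<subseteq> e'" using u v by auto
    moreover have "finite e" "finite e'" using calculation(2,3) by (auto intro: card_ge_0_finite)
    ultimately have "{u, v} = e" "{u, v} = e'" by (metis card_subset_eq)+
    then show False using assms(4) by simp
  qed
  then show "\<exists>!v. v \<in> e \<inter> e'" using v by blast
qed

lemma line_edges_insertI:
  "a \<in> E \<Longrightarrow> b \<in> E \<Longrightarrow> a \<noteq> b \<Longrightarrow> a \<inter> b \<noteq> {} \<Longrightarrow> {a, b} \<in> line_edges E"
  unfolding line_edges_def by blast

lemma line_len_insert: "a \<noteq> b \<Longrightarrow> line_len L {a, b} = (L a + L b) / 2"
  unfolding line_len_def by simp

lemma line_len_nonneg:
  assumes "\<forall>e\<in>E. 0 \<le> L e"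
  shows "\<forall>f\<in>line_edges E. 0 \<le> line_len L f"
proof
  fix f assume "f \<in> line_edges E"
  then obtain a b where "f = {a, b}" "a \<in> E" "b \<in> E" "a \<noteq> b"
    unfolding line_edges_def by blast
  then show "0 \<le> line_len L f" using assms by (simp add: line_len_insert)
qed

lemma line_graph_walk_lift:
  fixes L :: "'a set \<Rightarrow> real"
  assumes "\<forall>e\<in>E. 0 \<le> L e"
  shows "is_walk E ws \<Longrightarrow> a \<in> E \<Longrightarrow> hd ws \<in> a \<Longrightarrow> b \<in> E \<Longrightarrow> last ws \<in> b \<Longrightarrow>
    \<exists>lws. is_walk (line_edges E) lws \<and> hd lws = a \<and> last lws = b \<and>
      walk_len (line_len L) lws \<le> walk_len L ws + (L a + L b) / 2"
proof (induction ws arbitrary: a)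
  case Nil
  then show ?case by (simp add: is_walk_def)
next
  case (Cons u ws)
  show ?case
  proof (cases ws)
    case Nil
    show ?thesis
    proof (cases "a = b")
      case True
      then show ?thesis using Cons.prems assms Nil
        by (intro exI[of _ "[a]"]) (auto simp: is_walk_singleton walk_len_singleton)
    next
      case False
      have "{a, b} \<in> line_edges E" using Cons.prems Nil False by (intro line_edges_insertI) auto
      then show ?thesis using Nil False
        by (intro exI[of _ "[a, b]"])
          (auto simp: is_walk_Cons_Cons is_walk_singleton walk_len_Cons_Cons walk_len_singleton
            line_len_insert)
    qed
  next
    case (Cons w ws')
    let ?g = "{u, w}"
    have g: "?g \<in> E" "is_walk E (w # ws')"
      using Cons.prems Cons by (auto simp: is_walk_Cons_Cons)
    obtain lws where lws: "is_walk (line_edges E) lws" "hd lws = ?g" "last lws = b"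
      "walk_len (line_len L) lws \<le> walk_len L (w # ws') + (L ?g + L b) / 2"
      using Cons.IH[of ?g] g Cons.prems Cons by auto
    have len: "walk_len L (u # ws) = L ?g + walk_len L (w # ws')"
      using Cons by (simp add: walk_len_Cons_Cons)
    have "0 \<le> L ?g" "0 \<le> L a" using assms g Cons.prems by auto
    show ?thesis
    proof (cases "a = ?g")
      case True
      then show ?thesis using lws len \<open>0 \<le> L ?g\<close> by (intro exI[of _ lws]) auto
    next
      case False
      obtain l lws' where lws_Cons: "lws = l # lws'"
        using lws(1) by (cases lws) (auto simp: is_walk_def)
      have "{a, ?g} \<in> line_edges E" using False Cons.prems g by (intro line_edges_insertI) auto
      then have "is_walk (line_edges E) (a # lws)"
        using lws lws_Cons by (auto simp: is_walk_Cons_Cons)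
      moreover have "walk_len (line_len L) (a # lws) = (L a + L ?g) / 2 + walk_len (line_len L) lws"
        using lws_Cons lws(2) False by (simp add: walk_len_Cons_Cons line_len_insert)
      then have "walk_len (line_len L) (a # lws) \<le> walk_len L (u # ws) + (L a + L b) / 2"
        using lws(4) len by argo
      ultimately show ?thesis using lws lws_Cons by (intro exI[of _ "a # lws"]) auto
    qed
  qed
qed

lemma line_graph_vdist_le:
  fixes L :: "'a set \<Rightarrow> real"
  assumes "simple_graph V E" "graph_connected V E" "\<forall>e\<in>E. 0 \<le> L e"
    and "X \<in> E" "Y \<in> E" "u \<in> X" "w \<in> Y"
  shows "vdist (line_edges E) (line_len L) X Y \<le> vdist E L u w + (L X + L Y) / 2"
proof -
  have "vdist (line_edges E) (line_len L) X Y - (L X + L Y) / 2 \<le> vdist E L u w"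
  proof (rule vdist_greatest)
    have "u \<in> V" "w \<in> V" using assms simple_graph_edgeD(1) by blast+
    then show "\<exists>ws. is_walk E ws \<and> hd ws = u \<and> last ws = w"
      using assms(2) unfolding graph_connected_def by blast
  next
    fix ws assume ws: "is_walk E ws" "hd ws = u" "last ws = w"
    obtain lws where "is_walk (line_edges E) lws" "hd lws = X" "last lws = Y"
      "walk_len (line_len L) lws \<le> walk_len L ws + (L X + L Y) / 2"
      using line_graph_walk_lift[OF assms(3) ws(1) assms(4) _ assms(5)] ws assms(6,7) by auto
    then show "vdist (line_edges E) (line_len L) X Y - (L X + L Y) / 2 \<le> walk_len L ws"
      using vdist_le_walk_len[of "line_edges E" lws X Y "line_len L"] line_len_nonneg[OF assms(3)]
      by fastforce
  qed
  then show ?thesis by simp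
qed

lemma line_graph_vdist_nonneg:
  fixes L :: "'a set \<Rightarrow> real"
  assumes "simple_graph V E" "graph_connected V E" "\<forall>e\<in>E. 0 \<le> L e" "X \<in> E" "Y \<in> E"
  shows "0 \<le> vdist (line_edges E) (line_len L) X Y"
proof (intro vdist_nonneg line_len_nonneg[OF assms(3)])
  obtain u w where uw: "u \<in> X" "w \<in> Y" "u \<in> V" "w \<in> V"
    using simple_graph_edgeD[OF assms(1)] assms(4,5) by (meson ex_in_conv subsetD)
  then obtain ws where ws: "is_walk E ws" "hd ws = u" "last ws = w"
    using assms(2) unfolding graph_connected_def by blast
  have "hd ws \<in> X" "last ws \<in> Y" using uw ws by simp_all
  from line_graph_walk_lift[OF assms(3) ws(1) assms(4) this(1) assms(5) this(2)]
  show "\<exists>lws. is_walk (line_edges E) lws \<and> hd lws = X \<and> last lws = Y" by blast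
qed

lemma to_end_nonneg: "p \<in> mg_points E L \<Longrightarrow> 0 \<le> to_end L p a"
  by (auto simp: mg_points_def to_end_def)

lemma mg_dist_le_via_vertices:
  assumes "p \<in> mg_points E L" "q \<in> mg_points E L"
    and "\<forall>a\<in>fst p. \<forall>b\<in>fst q. 0 \<le> vdist E L a b"
    and "a \<in> fst p" "b \<in> fst q"
  shows "mg_dist E L p q \<le> to_end L p a + vdist E L a b + to_end L q b"
  unfolding mg_dist_def
proof (rule cInf_lower)
  have "0 \<le> to_end L p a + vdist E L a b + to_end L q b" if "a \<in> fst p" "b \<in> fst q" for a b
    using assms(3) that to_end_nonneg[OF assms(1), of a] to_end_nonneg[OF assms(2), of b] by simp
  then show "bdd_below ({\<bar>to_end L p a - to_end L q a\<bar> |a. fst p = fst q \<and> a \<in> fst p}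
      \<union> {to_end L p a + vdist E L a b + to_end L q b |a b. a \<in> fst p \<and> b \<in> fst q})"
    by (intro bdd_belowI[where m=0]) auto
qed (use assms(4,5) in blast)

lemma mg_dist_greatest:
  assumes "fst p \<noteq> {}" "fst q \<noteq> {}"
    and "\<And>a. fst p = fst q \<Longrightarrow> a \<in> fst p \<Longrightarrow> c \<le> \<bar>to_end L p a - to_end L q a\<bar>"
    and "\<And>a b. a \<in> fst p \<Longrightarrow> b \<in> fst q \<Longrightarrow> c \<le> to_end L p a + vdist E L a b + to_end L q b"
  shows "c \<le> mg_dist E L p q"
  unfolding mg_dist_def using assms by (intro cInf_greatest) blast+

lemma line_graph_pointE:
  assumes "x \<in> mg_points (line_edges E) (line_len L)"
  obtains e e' t where "x = ({e, e'}, e, t)" "e \<in> E" "e' \<in> E" "e \<noteq> e'" "e \<inter> e' \<noteq> {}"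
    "0 \<le> t" "t \<le> (L e + L e') / 2" "other_end {e, e'} e = e'"
proof -
  obtain f e t where x: "x = (f, e, t)" "f \<in> line_edges E" "e \<in> f" "0 \<le> t" "t \<le> line_len L f"
    using assms unfolding mg_points_def by blast
  then obtain e' where f: "f = {e, e'}" "e \<in> E" "e' \<in> E" "e \<noteq> e'" "e \<inter> e' \<noteq> {}"
    unfolding line_edges_def by (auto simp: insert_commute)
  have "other_end {e, e'} e = e'"
    unfolding other_end_def using f(4) by (intro the_equality) auto
  then show ?thesis using that x f by (simp add: line_len_insert)
qed

lemma hmap_pointE:
  assumes "simple_graph V E" "\<forall>e\<in>E. 0 \<le> L e"
    and "x \<in> mg_points (line_edges E) (line_len L)"
  obtains X where "X \<in> fst x" "fst (hmap L x) = X" "hmap L x \<in> mg_points E L"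
    "to_end (line_len L) x X \<le> L X / 2"
proof -
  obtain e e' t where x: "x = ({e, e'}, e, t)" "e \<in> E" "e' \<in> E" "e \<noteq> e'" "e \<inter> e' \<noteq> {}"
    "0 \<le> t" "t \<le> (L e + L e') / 2" "other_end {e, e'} e = e'"
    using line_graph_pointE[OF assms(3)] by blast
  define v where "v = (THE v. v \<in> e \<inter> e')"
  have v: "v \<in> e" "v \<in> e'"
    using simple_graph_common_vertex[OF assms(1) x(2-5)] unfolding v_def by auto
  have h: "hmap L x = (if t \<le> L e / 2 then (e, v, L e / 2 - t) else (e', v, t - L e / 2))"
    unfolding hmap_def v_def x(1) using x(8) by (simp only: prod.case Let_def)
  have "0 \<le> L e" "0 \<le> L e'" using assms(2) x(2,3) by auto
  show ?thesis
  proof (cases "t \<le> L e / 2")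
    case True
    then show ?thesis
      using that[of e] h x v \<open>0 \<le> L e\<close> by (simp add: mg_points_def to_end_def)
  next
    case False
    then have h': "hmap L x = (e', v, t - L e / 2)" using h by simp
    show ?thesis
    proof (rule that[of e'])
      show "e' \<in> fst x" "fst (hmap L x) = e'" using x(1) h' by simp_all
      have "0 \<le> t - L e / 2" "t - L e / 2 \<le> L e'" using False x(7) \<open>0 \<le> L e'\<close> by argo+
      then show "hmap L x \<in> mg_points E L" using h' x(3) v by (simp add: mg_points_def)
      have "to_end (line_len L) x e' = (L e + L e') / 2 - t"
        using x(1,4) by (simp add: to_end_def line_len_insert)
      then show "to_end (line_len L) x e' \<le> L e' / 2" using False by argo
    qed
  qed
qed

lemma line_graph_dist_le_hmap_dist:
  fixes L :: "'a set \<Rightarrow> real"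
  assumes graph: "simple_graph V E" "graph_connected V E"
    and nonneg: "\<forall>e\<in>E. 0 \<le> L e" and bound: "\<forall>e\<in>E. L e \<le> M"
    and x: "x \<in> mg_points (line_edges E) (line_len L)"
    and y: "y \<in> mg_points (line_edges E) (line_len L)"
  shows "mg_dist (line_edges E) (line_len L) x y \<le> mg_dist E L (hmap L x) (hmap L y) + 2 * M"
proof -
  let ?dL = "mg_dist (line_edges E) (line_len L) x y"
  obtain X where X: "X \<in> fst x" "fst (hmap L x) = X" "hmap L x \<in> mg_points E L"
    "to_end (line_len L) x X \<le> L X / 2"
    using hmap_pointE[OF graph(1) nonneg x] .
  obtain Y where Y: "Y \<in> fst y" "fst (hmap L y) = Y" "hmap L y \<in> mg_points E L"
    "to_end (line_len L) y Y \<le> L Y / 2"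
    using hmap_pointE[OF graph(1) nonneg y] .
  have "fst x \<subseteq> E" "fst y \<subseteq> E"
    using x y unfolding mg_points_def line_edges_def by auto
  then have "X \<in> E" "Y \<in> E" using X Y by auto
  have "?dL \<le> to_end (line_len L) x X + vdist (line_edges E) (line_len L) X Y
      + to_end (line_len L) y Y"
    using \<open>fst x \<subseteq> E\<close> \<open>fst y \<subseteq> E\<close> X Y
    by (intro mg_dist_le_via_vertices[OF x y]) (auto intro: line_graph_vdist_nonneg[OF graph nonneg])
  then have dL: "?dL \<le> L X / 2 + vdist (line_edges E) (line_len L) X Y + L Y / 2"
    using X(4) Y(4) by linarith
  have "?dL - 2 * M \<le> mg_dist E L (hmap L x) (hmap L y)"
  proof (rule mg_dist_greatest)
    show "fst (hmap L x) \<noteq> {}" "fst (hmap L y) \<noteq> {}"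
      using X Y \<open>X \<in> E\<close> \<open>Y \<in> E\<close> simple_graph_edgeD(2)[OF graph(1)] by auto
  next
    fix a assume "fst (hmap L x) = fst (hmap L y)"
    then have "X = Y" using X Y by simp
    then have "?dL \<le> M"
      using dL vdist_self[OF line_len_nonneg[OF nonneg]] bound \<open>X \<in> E\<close> by auto
    then show "?dL - 2 * M \<le> \<bar>to_end L (hmap L x) a - to_end L (hmap L y) a\<bar>"
      using bound nonneg \<open>X \<in> E\<close> by fastforce
  next
    fix a b assume "a \<in> fst (hmap L x)" "b \<in> fst (hmap L y)"
    then have "vdist (line_edges E) (line_len L) X Y \<le> vdist E L a b + (L X + L Y) / 2"
      using X Y \<open>X \<in> E\<close> \<open>Y \<in> E\<close> by (intro line_graph_vdist_le[OF graph nonneg]) auto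
    moreover have "L X \<le> M" "L Y \<le> M" using bound \<open>X \<in> E\<close> \<open>Y \<in> E\<close> by auto
    ultimately show "?dL - 2 * M \<le> to_end L (hmap L x) a + vdist E L a b + to_end L (hmap L y) b"
      using dL to_end_nonneg[OF X(3), of a] to_end_nonneg[OF Y(3), of b] by (simp add: field_simps)
  qed
  then show ?thesis by simp
qed

lemma ereal_le_plus_twice_SUP:
  fixes f :: "'a \<Rightarrow> real"
  assumes "A \<noteq> {}" and "\<And>M. \<forall>i\<in>A. f i \<le> M \<Longrightarrow> a \<le> b + 2 * M"
  shows "ereal a \<le> ereal b + 2 * (SUP i\<in>A. ereal (f i))"
proof (cases "SUP i\<in>A. ereal (f i)")
  case (real M)
  then have "\<forall>i\<in>A. f i \<le> M" by (metis SUP_upper ereal_less_eq(3))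
  then have "ereal a \<le> ereal (b + 2 * M)" using assms(2) by simp
  then show ?thesis using real by simp
next
  case MInf
  then show ?thesis using assms(1) SUP_upper[of _ A "\<lambda>i. ereal (f i)"] by force
qed simp

theorem mainTheorem2:
  fixes V :: "'v set" and E :: "'v set set" and L :: "'v set \<Rightarrow> real"
    and x y :: "'v set set \<times> 'v set \<times> real"
  assumes "simple_graph V E"
    and "graph_connected V E"
    and "locally_finite V E"
    and "\<forall>e\<in>E. L e > 0"
    and "x \<in> mg_points (line_edges E) (line_len L)"
    and "y \<in> mg_points (line_edges E) (line_len L)"
  shows "ereal (mg_dist (line_edges E) (line_len L) x y)
           \<le> ereal (mg_dist E L (hmap L x) (hmap L y)) + 2 * (SUP e\<in>E. ereal (L e))"
proof (rule ereal_le_plus_twice_SUP)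
  show "E \<noteq> {}" using line_graph_pointE[OF assms(5)] by blast
  have "\<forall>e\<in>E. 0 \<le> L e" using assms(4) by (auto intro: less_imp_le)
  then show "mg_dist (line_edges E) (line_len L) x y \<le> mg_dist E L (hmap L x) (hmap L y) + 2 * M"
    if "\<forall>e\<in>E. L e \<le> M" for M
    using line_graph_dist_le_hmap_dist[OF assms(1,2) _ that assms(5,6)] by blast
qed

end
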